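(* Suppose $n\ge 1$, $0<q\le 1$ and $\pi\sim\mu_{n,q}$. Then $$n(1-q)\le \mathbb{E}(\mathrm{LIS}(\pi))\le n-\frac{q}{1+q}(n-1).$$
   Context: For $q>0$ and an integer $n\ge1$, the Mallows measure $\mu_{n,q}$ on $S_n$ is $\mu_{n,q}(\pi)=q^{\mathrm{inv}(\pi)}/Z_{n,q}$, where $\mathrm{inv}(\pi)$ is the number of pairs $i<j$ with $\pi(i)>\pi(j)$ and $Z_{n,q}$ is the normalizing constant (for $q=1$ this is the uniform measure). $\mathrm{LIS}(\pi)$ denotes the length of a longest increasing subsequence of $\pi$. *)

theory Defs
  imports "HOL-Analysis.Analysis" "HOL-Combinatorics.Permutations"
begin

definition perms :: "nat \<Rightarrow> (nat \<Rightarrow> nat) set" where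
  "perms n = {p. p permutes {1..n}}"

definition inversions :: "nat \<Rightarrow> (nat \<Rightarrow> nat) \<Rightarrow> nat" where
  "inversions n p = card {(i, j). i \<in> {1..n} \<and> j \<in> {1..n} \<and> i < j \<and> p i > p j}"

definition LIS :: "nat \<Rightarrow> (nat \<Rightarrow> nat) \<Rightarrow> nat" where
  "LIS n p = Max {card S | S. S \<subseteq> {1..n} \<and> (\<forall>i\<in>S. \<forall>j\<in>S. i < j \<longrightarrow> p i < p j)}"

definition mallows_Z :: "nat \<Rightarrow> real \<Rightarrow> real" where
  "mallows_Z n q = (\<Sum>p\<in>perms n. q ^ inversions n p)"

definition mallows_prob :: "nat \<Rightarrow> real \<Rightarrow> (nat \<Rightarrow> nat) \<Rightarrow> real" where
  "mallows_prob n q p = q ^ inversions n p / mallows_Z n q"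

definition mallows_expect :: "nat \<Rightarrow> real \<Rightarrow> ((nat \<Rightarrow> nat) \<Rightarrow> real) \<Rightarrow> real" where
  "mallows_expect n q f = (\<Sum>p\<in>perms n. f p * mallows_prob n q p)"

end

theory Submission
  imports Defs
begin

text \<open>Lower bound: the right-to-left minima of \<open>\<pi>\<close> form an increasing subsequence, and
  a fixed position fails to be one with probability at most \<open>q\<close>, because exchanging \<open>\<pi>(i)\<close>
  with the largest smaller value to its right removes exactly one inversion and can be undone.
  Upper bound: an increasing subsequence meets every maximal descending run at most once, so
  \<open>LIS(\<pi>) \<le> n - des(\<pi>)\<close>; swapping two adjacent entries is an involution that changes the
  number of inversions by one, so each of the \<open>n - 1\<close> descents has probability exactly
  \<open>q/(1+q)\<close>.\<close>

lemma finite_perms: "finite (perms n)"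
  unfolding perms_def by (simp add: finite_permutations)

lemma mallows_Z_pos:
  assumes "q > 0"
  shows "mallows_Z n q > 0"
  unfolding mallows_Z_def using assms
  by (intro sum_pos2[of _ id]) (auto simp: finite_permutations perms_def permutes_id)

lemma sum_mallows_prob:
  assumes "q > 0"
  shows "(\<Sum>p\<in>perms n. mallows_prob n q p) = 1"
  using mallows_Z_pos[OF assms, of n]
  by (simp add: mallows_prob_def mallows_Z_def flip: sum_divide_distrib)

lemma mallows_expect_mono:
  assumes "q > 0" and "\<And>p. p \<in> perms n \<Longrightarrow> f p \<le> g p"
  shows "mallows_expect n q f \<le> mallows_expect n q g"
  unfolding mallows_expect_def using assms mallows_Z_pos[OF assms(1), of n]
  by (intro sum_mono mult_right_mono) (auto simp: mallows_prob_def)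

lemma mallows_expect_const_diff:
  assumes "q > 0"
  shows "mallows_expect n q (\<lambda>p. c - f p) = c - mallows_expect n q f"
  using sum_mallows_prob[OF assms, of n]
  by (simp add: mallows_expect_def left_diff_distrib sum_subtractf flip: sum_distrib_left)

lemma mallows_expect_card:
  assumes "finite A"
  shows "mallows_expect n q (\<lambda>p. real (card {i\<in>A. P i p}))
    = (\<Sum>i\<in>A. mallows_expect n q (\<lambda>p. of_bool (P i p)))"
proof -
  have "real (card {i\<in>A. P i p}) = (\<Sum>i\<in>A. of_bool (P i p))" for p
    using assms by (simp add: Int_def)
  then show ?thesis
    unfolding mallows_expect_def by (simp add: sum_distrib_right) (rule sum.swap)
qed

lemma mallows_expect_indicator:
  "mallows_expect n q (\<lambda>p. of_bool (P p))
    = (\<Sum>p\<in>{p\<in>perms n. P p}. q ^ inversions n p) / mallows_Z n q"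
proof -
  have "mallows_expect n q (\<lambda>p. of_bool (P p))
      = (\<Sum>p\<in>perms n. of_bool (P p) * q ^ inversions n p) / mallows_Z n q"
    by (simp add: mallows_expect_def mallows_prob_def sum_divide_distrib)
  then show ?thesis by (simp add: finite_perms Int_def)
qed

lemma sum_power_reindex_Suc:
  fixes q :: "'a::comm_semiring_1"
  assumes "inj_on f A" and "\<And>x. x \<in> A \<Longrightarrow> c x = Suc (c (f x))"
  shows "(\<Sum>x\<in>A. q ^ c x) = q * (\<Sum>y\<in>f ` A. q ^ c y)"
  using assms by (simp add: sum.reindex sum_distrib_left cong: sum.cong)

definition right_inversions :: "nat \<Rightarrow> (nat \<Rightarrow> nat) \<Rightarrow> nat \<Rightarrow> nat set" where
  "right_inversions n p x = {y\<in>{1..n}. x < y \<and> p y < p x}"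

lemma inversions_eq_sum_right_inversions:
  "inversions n p = (\<Sum>x\<in>{1..n}. card (right_inversions n p x))"
proof -
  have "{(i, j). i \<in> {1..n} \<and> j \<in> {1..n} \<and> i < j \<and> p i > p j}
      = Sigma {1..n} (right_inversions n p)"
    by (auto simp: right_inversions_def)
  then show ?thesis
    unfolding inversions_def by (simp add: card_SigmaI right_inversions_def)
qed

context
  fixes n i j :: nat and p :: "nat \<Rightarrow> nat"
  assumes p: "p permutes {1..n}" and ij: "1 \<le> i" "i < j" "j \<le> n" and pji: "p j < p i"
    and no_between: "\<And>k. i < k \<Longrightarrow> k < j \<Longrightarrow> p k < p j \<or> p i < p k"
begin

lemma card_right_inversions_comp_transpose_other:
  assumes x: "x \<in> {1..n}" "x \<noteq> i" "x \<noteq> j"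
  shows "card (right_inversions n (p \<circ> Transposition.transpose i j) x)
    = card (right_inversions n p x)"
proof -
  let ?t = "Transposition.transpose i j"
  consider "x < i" | "i < x" "x < j" | "j < x" using x by linarith
  then show ?thesis
  proof cases
    case 1
    then have "right_inversions n (p \<circ> ?t) x = ?t ` right_inversions n p x"
      using ij x
      by (auto simp: right_inversions_def Transposition.transpose_def image_iff split: if_splits)
    then show ?thesis by (simp add: card_image inj_on_transpose)
  next
    case 2
    have "p i < p x \<longleftrightarrow> p j < p x"
      using no_between[OF 2] pji permutes_inj[OF p] x
      by (metis injD less_trans not_less_iff_gr_or_eq)
    then have "right_inversions n (p \<circ> ?t) x = right_inversions n p x"
      using 2 x ij by (auto simp: right_inversions_def Transposition.transpose_def)
    then show ?thesis by simp
  next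
    case 3
    then have "right_inversions n (p \<circ> ?t) x = right_inversions n p x"
      using x ij by (auto simp: right_inversions_def Transposition.transpose_def)
    then show ?thesis by simp
  qed
qed

lemma card_right_inversions_comp_transpose_ends:
  "card (right_inversions n (p \<circ> Transposition.transpose i j) i)
      + card (right_inversions n (p \<circ> Transposition.transpose i j) j) + 1
    = card (right_inversions n p i) + card (right_inversions n p j)"
proof -
  let ?q = "p \<circ> Transposition.transpose i j"
  define M where "M = {y\<in>{1..n}. i < y \<and> y < j \<and> p y < p i}"
  have M_alt: "M = {y\<in>{1..n}. i < y \<and> y < j \<and> p y < p j}"
    unfolding M_def using no_between pji by fastforce
  have fin: "finite M" "finite (right_inversions n ?q j)" "finite (right_inversions n p j)"
    by (auto simp: M_def right_inversions_def)
  have "right_inversions n p i = insert j (M \<union> right_inversions n ?q j)"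
    using ij pji by (auto simp: M_def right_inversions_def)
  moreover have "j \<notin> M \<union> right_inversions n ?q j" "M \<inter> right_inversions n ?q j = {}"
    by (auto simp: M_def right_inversions_def)
  ultimately have "card (right_inversions n p i) = Suc (card M + card (right_inversions n ?q j))"
    using fin by (simp add: card_Un_disjoint)
  moreover have "right_inversions n ?q i = M \<union> right_inversions n p j"
    "M \<inter> right_inversions n p j = {}"
    using ij pji
    by (auto simp: M_alt right_inversions_def Transposition.transpose_def split: if_splits)
  then have "card (right_inversions n ?q i) = card M + card (right_inversions n p j)"
    using fin by (simp add: card_Un_disjoint)
  ultimately show ?thesis by simp
qed

lemma inversions_comp_transpose:
  "inversions n (p \<circ> Transposition.transpose i j) + 1 = inversions n p"
proof -
  have split: "(\<Sum>x\<in>{1..n}. f x) = f i + f j + (\<Sum>x\<in>{1..n} - {i, j}. f x)"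
    for f :: "nat \<Rightarrow> nat"
  proof -
    have "(\<Sum>x\<in>{1..n}. f x) = f i + (\<Sum>x\<in>{1..n} - {i}. f x)"
      using ij by (intro sum.remove) auto
    also have "(\<Sum>x\<in>{1..n} - {i}. f x) = f j + (\<Sum>x\<in>{1..n} - {i} - {j}. f x)"
      using ij by (intro sum.remove) auto
    also have "{1..n} - {i} - {j} = {1..n} - {i, j}" by blast
    finally show ?thesis by (simp add: add.assoc)
  qed
  let ?c = "\<lambda>r x. card (right_inversions n r x)" and ?r = "p \<circ> Transposition.transpose i j"
  have "(\<Sum>x\<in>{1..n} - {i, j}. ?c ?r x) = (\<Sum>x\<in>{1..n} - {i, j}. ?c p x)"
    by (rule sum.cong) (auto intro: card_right_inversions_comp_transpose_other)
  moreover have "inversions n ?r = ?c ?r i + ?c ?r j + (\<Sum>x\<in>{1..n} - {i, j}. ?c ?r x)"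
    "inversions n p = ?c p i + ?c p j + (\<Sum>x\<in>{1..n} - {i, j}. ?c p x)"
    unfolding inversions_eq_sum_right_inversions by (rule split)+
  ultimately show ?thesis
    using card_right_inversions_comp_transpose_ends by linarith
qed

end

definition descent :: "(nat \<Rightarrow> nat) \<Rightarrow> nat \<Rightarrow> bool" where
  "descent p i \<longleftrightarrow> p (Suc i) < p i"

lemma descent_weight:
  assumes "1 \<le> i" "i < n"
  shows "(1 + q) * (\<Sum>p\<in>{p\<in>perms n. descent p i}. q ^ inversions n p) = q * mallows_Z n q"
proof -
  define D where "D = {p\<in>perms n. descent p i}"
  define A where "A = {p\<in>perms n. p i < p (Suc i)}"
  define s where "s p = p \<circ> Transposition.transpose i (Suc i)" for p :: "nat \<Rightarrow> nat"
  have ss: "s (s p) = p" for p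
    unfolding s_def by (simp add: comp_assoc)
  have s_perms: "s p \<in> perms n" if "p \<in> perms n" for p
    using that assms unfolding s_def perms_def
    by (auto intro!: permutes_compose permutes_swap_id)
  have s_swaps: "s p i = p (Suc i)" "s p (Suc i) = p i" for p
    by (simp_all add: s_def)
  have "(\<Sum>p\<in>D. q ^ inversions n p) = q * (\<Sum>p\<in>s ` D. q ^ inversions n p)"
  proof (rule sum_power_reindex_Suc)
    show "inj_on s D" by (metis inj_onI ss)
    fix p assume "p \<in> D"
    then show "inversions n p = Suc (inversions n (s p))"
      using inversions_comp_transpose[of p n i "Suc i"] assms
      by (simp add: D_def perms_def descent_def s_def)
  qed
  also have "s ` D = A"
  proof
    show "s ` D \<subseteq> A" using s_perms s_swaps by (auto simp: D_def A_def descent_def)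
    show "A \<subseteq> s ` D"
    proof
      fix p assume "p \<in> A"
      then have "s p \<in> D" using s_perms s_swaps by (auto simp: D_def A_def descent_def)
      then show "p \<in> s ` D" by (rule rev_image_eqI) (simp add: ss)
    qed
  qed
  finally have "(\<Sum>p\<in>D. q ^ inversions n p) = q * (\<Sum>p\<in>A. q ^ inversions n p)" .
  moreover have "mallows_Z n q = (\<Sum>p\<in>A. q ^ inversions n p) + (\<Sum>p\<in>D. q ^ inversions n p)"
  proof -
    have "perms n = A \<union> D"
    proof (intro set_eqI iffI)
      fix p assume p: "p \<in> perms n"
      then have "p i \<noteq> p (Suc i)"
        using permutes_inj[of p "{1..n}"] by (auto simp: perms_def inj_eq)
      with p show "p \<in> A \<union> D" by (auto simp: A_def D_def descent_def)
    qed (auto simp: A_def D_def)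
    moreover have "A \<inter> D = {}" "finite A" "finite D"
      by (auto simp: A_def D_def descent_def finite_perms)
    ultimately show ?thesis
      unfolding mallows_Z_def by (simp add: sum.union_disjoint)
  qed
  ultimately show ?thesis
    unfolding D_def[symmetric] by (simp add: ring_distribs)
qed

lemma mallows_expect_descent:
  assumes "q > 0" "1 \<le> i" "i < n"
  shows "mallows_expect n q (\<lambda>p. of_bool (descent p i)) = q / (1 + q)"
  using descent_weight[OF assms(2,3), of q] mallows_Z_pos[OF assms(1), of n] assms(1)
  by (simp add: mallows_expect_indicator field_simps)

definition rl_min :: "nat \<Rightarrow> (nat \<Rightarrow> nat) \<Rightarrow> nat \<Rightarrow> bool" where
  "rl_min n p i \<longleftrightarrow> (\<forall>j\<in>{1..n}. i < j \<longrightarrow> p i < p j)"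

definition largest_smaller_right :: "nat \<Rightarrow> (nat \<Rightarrow> nat) \<Rightarrow> nat \<Rightarrow> nat" where
  "largest_smaller_right n p i = (ARG_MAX p j. j \<in> {1..n} \<and> i < j \<and> p j < p i)"

lemma largest_smaller_right:
  assumes "inj p" and "\<not> rl_min n p i"
  defines "j \<equiv> largest_smaller_right n p i"
  shows "j \<in> {1..n}" "i < j" "p j < p i"
    and "\<And>k. k \<in> {1..n} \<Longrightarrow> i < k \<Longrightarrow> p k < p i \<Longrightarrow> p k \<le> p j"
proof -
  obtain k where k: "k \<in> {1..n}" "i < k" "\<not> p i < p k"
    using assms(2) by (auto simp: rl_min_def)
  moreover have "p k \<noteq> p i"
    using assms(1) k(2) by (simp add: inj_eq)
  ultimately have pk: "p k < p i" by simp
  let ?P = "\<lambda>j. j \<in> {1..n} \<and> i < j \<and> p j < p i"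
  have "?P j \<and> (\<forall>y. ?P y \<longrightarrow> p y \<le> p j)"
    unfolding j_def largest_smaller_right_def
    by (rule arg_max_nat_lemma[of ?P k]) (use k pk in auto)
  then show "j \<in> {1..n}" "i < j" "p j < p i"
    and "\<And>k. k \<in> {1..n} \<Longrightarrow> i < k \<Longrightarrow> p k < p i \<Longrightarrow> p k \<le> p j"
    by auto
qed

lemma inversions_comp_transpose_largest_smaller_right:
  assumes p: "p permutes {1..n}" and "1 \<le> i" "\<not> rl_min n p i"
  shows "inversions n (p \<circ> Transposition.transpose i (largest_smaller_right n p i)) + 1
    = inversions n p"
proof -
  let ?j = "largest_smaller_right n p i"
  note j = largest_smaller_right[OF permutes_inj[OF p] assms(3)]
  have "p k < p ?j \<or> p i < p k" if "i < k" "k < ?j" for k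
  proof (rule ccontr)
    assume "\<not> ?thesis"
    moreover have "p k \<noteq> p i" "p k \<noteq> p ?j"
      using that permutes_inj[OF p] by (simp_all add: inj_eq)
    ultimately have "p k < p i" "p ?j < p k" by auto
    moreover have "k \<in> {1..n}" using that j(1) assms(2) by auto
    ultimately show False using j(4)[of k] that(1) by simp
  qed
  with j assms show ?thesis by (intro inversions_comp_transpose) auto
qed

lemma largest_smaller_right_recover:
  assumes p: "p permutes {1..n}" and "\<not> rl_min n p i"
  defines "j \<equiv> largest_smaller_right n p i"
  defines "r \<equiv> p \<circ> Transposition.transpose i j"
  shows "(ARG_MIN r k. k \<in> {1..n} \<and> i < k \<and> r i < r k) = j"
proof (rule arg_min_inj_eq)
  note j = largest_smaller_right[OF permutes_inj[OF p] assms(2), folded j_def]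
  have "inj r" unfolding r_def using permutes_inj[OF p] by (simp add: inj_compose inj_transpose)
  then show "inj_on r {k. k \<in> {1..n} \<and> i < k \<and> r i < r k}"
    using inj_on_subset subset_UNIV by blast
  show "j \<in> {1..n} \<and> i < j \<and> r i < r j" using j by (simp add: r_def)
  show "\<forall>k. k \<in> {1..n} \<and> i < k \<and> r i < r k \<longrightarrow> r j \<le> r k"
  proof (intro allI impI)
    fix k assume k: "k \<in> {1..n} \<and> i < k \<and> r i < r k"
    show "r j \<le> r k"
    proof (cases "k = j")
      case False
      then have "p j < p k" "p k \<noteq> p i"
        using k j permutes_inj[OF p] by (auto simp: r_def inj_eq)
      then show ?thesis using k j False by (force simp: r_def)
    qed simp
  qed
qed

lemma non_rl_min_weight:
  fixes q :: real
  assumes "q \<ge> 0" and "1 \<le> i"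
  shows "(\<Sum>p\<in>{p\<in>perms n. \<not> rl_min n p i}. q ^ inversions n p) \<le> q * mallows_Z n q"
proof -
  define B where "B = {p\<in>perms n. \<not> rl_min n p i}"
  define f where "f p = p \<circ> Transposition.transpose i (largest_smaller_right n p i)" for p
  define g where "g (r :: nat \<Rightarrow> nat)
    = r \<circ> Transposition.transpose i (ARG_MIN r k. k \<in> {1..n} \<and> i < k \<and> r i < r k)" for r
  have p: "p permutes {1..n}" "\<not> rl_min n p i" if "p \<in> B" for p
    using that by (auto simp: B_def perms_def)
  have "(\<Sum>p\<in>B. q ^ inversions n p) = q * (\<Sum>p\<in>f ` B. q ^ inversions n p)"
  proof (rule sum_power_reindex_Suc)
    show "inj_on f B"
    proof (rule inj_on_inverseI)
      fix p assume "p \<in> B"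
      then show "g (f p) = p"
        using largest_smaller_right_recover[OF p] by (simp add: f_def g_def comp_assoc)
    qed
    fix p assume "p \<in> B"
    then show "inversions n p = Suc (inversions n (f p))"
      using inversions_comp_transpose_largest_smaller_right[OF p(1) assms(2) p(2)]
      by (simp add: f_def)
  qed
  also have "\<dots> \<le> q * mallows_Z n q"
  proof -
    have "f p \<in> perms n" if "p \<in> B" for p
    proof -
      note j = largest_smaller_right[OF permutes_inj[OF p(1)[OF that]] p(2)[OF that]]
      then have "i \<in> {1..n}" using assms(2) by auto
      with j show ?thesis using p(1)[OF that]
        by (auto simp: f_def perms_def intro!: permutes_compose permutes_swap_id)
    qed
    then show ?thesis
      unfolding mallows_Z_def using assms(1)
      by (intro mult_left_mono sum_mono2) (auto simp: finite_perms)
  qed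
  finally show ?thesis unfolding B_def .
qed

lemma mallows_expect_rl_min:
  assumes "q > 0" "1 \<le> i"
  shows "1 - q \<le> mallows_expect n q (\<lambda>p. of_bool (rl_min n p i))"
proof -
  have "mallows_expect n q (\<lambda>p. of_bool (\<not> rl_min n p i)) \<le> q"
    using non_rl_min_weight[of q i n] mallows_Z_pos[of q n] assms
    by (simp add: mallows_expect_indicator divide_le_eq)
  moreover have "mallows_expect n q (\<lambda>p. of_bool (rl_min n p i))
      = mallows_expect n q (\<lambda>p. 1 - of_bool (\<not> rl_min n p i))"
    by (rule arg_cong[where f = "mallows_expect n q"]) (simp add: fun_eq_iff)
  ultimately show ?thesis
    using mallows_expect_const_diff[OF assms(1), of n 1 "\<lambda>p. of_bool (\<not> rl_min n p i)"]
    by linarith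
qed

lemma finite_LIS_lengths:
  fixes n :: nat
  shows "finite {card S | S. S \<subseteq> {1..n} \<and> (\<forall>i\<in>S. \<forall>j\<in>S. i < j \<longrightarrow> p i < p j)}"
  by (rule finite_subset[of _ "card ` Pow {1..n}"]) auto

lemma card_le_LIS:
  assumes "S \<subseteq> {1..n}" "strict_mono_on S p"
  shows "card S \<le> LIS n p"
  unfolding LIS_def using assms finite_LIS_lengths
  by (intro Max_ge) (auto simp: strict_mono_on_def)

lemma LIS_le:
  assumes "\<And>S. S \<subseteq> {1..n} \<Longrightarrow> strict_mono_on S p \<Longrightarrow> card S \<le> m"
  shows "LIS n p \<le> m"
proof -
  have "{card S | S. S \<subseteq> {1..n} \<and> (\<forall>i\<in>S. \<forall>j\<in>S. i < j \<longrightarrow> p i < p j)} \<noteq> {}"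
    by blast
  then show ?thesis
    unfolding LIS_def using assms finite_LIS_lengths by (auto simp: Max_le_iff strict_mono_on_def)
qed

lemma card_rl_min_le_LIS: "card {i\<in>{1..n}. rl_min n p i} \<le> LIS n p"
  by (rule card_le_LIS) (auto simp: strict_mono_on_def rl_min_def)

lemma descent_run_less:
  assumes "\<And>k. i \<le> k \<Longrightarrow> k < m \<Longrightarrow> descent p k"
  shows "i < k \<Longrightarrow> k \<le> m \<Longrightarrow> p k < p i"
proof (induction k)
  case (Suc k)
  show ?case
  proof (cases "k = i")
    case True
    then show ?thesis using assms[of i] Suc.prems by (simp add: descent_def)
  next
    case False
    then have "p k < p i" using Suc by simp
    moreover have "p (Suc k) < p k" using assms[of k] Suc.prems by (simp add: descent_def)
    ultimately show ?thesis by simp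
  qed
qed simp

lemma card_strict_mono_on_le_non_descents:
  assumes S: "S \<subseteq> {1..n}" "strict_mono_on S p"
  shows "card S \<le> card ({1..n} - {i\<in>{1..<n}. descent p i})"
proof -
  define A where "A = {1..n} - {i\<in>{1..<n}. descent p i}"
  define g where "g i = (LEAST r. i \<le> r \<and> r \<in> A)" for i
  have gA: "i \<le> g i \<and> g i \<in> A" if "i \<in> S" for i
  proof -
    have "i \<le> n \<and> n \<in> A" using that S by (auto simp: A_def)
    then show ?thesis unfolding g_def by (rule LeastI)
  qed
  have run: "p k < p i" if i: "i \<in> S" and "i < k" "k \<le> g i" for i k
  proof (rule descent_run_less[of i "g i"])
    fix k assume k: "i \<le> k" "k < g i"
    then have "k \<notin> A"
      using not_less_Least[of k "\<lambda>r. i \<le> r \<and> r \<in> A"] by (simp add: g_def)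
    moreover have "k \<in> {1..n}" using k gA[OF i] i S(1) by (auto simp: A_def)
    ultimately show "descent p k" by (simp add: A_def)
  qed (use that in auto)
  have collision: False if "a \<in> S" "b \<in> S" "a < b" "g a = g b" for a b
  proof -
    have "p b < p a" using run[OF that(1,3)] gA[OF that(2)] that(4) by simp
    moreover have "p a < p b" using S(2) that(1-3) by (auto simp: strict_mono_on_def)
    ultimately show False by simp
  qed
  have "inj_on g S"
  proof (rule inj_onI)
    fix a b assume "a \<in> S" "b \<in> S" "g a = g b"
    then show "a = b"
      using collision[of a b] collision[of b a] by (cases a b rule: linorder_cases) auto
  qed
  moreover have "g ` S \<subseteq> A" using gA by auto
  ultimately show ?thesis
    unfolding A_def[symmetric] by (intro card_inj_on_le) (auto simp: A_def)
qed

lemma LIS_add_descents_le: "LIS n p + card {i\<in>{1..<n}. descent p i} \<le> n"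
proof -
  let ?D = "{i\<in>{1..<n}. descent p i}"
  have sub: "?D \<subseteq> {1..n}" by auto
  have "LIS n p \<le> card ({1..n} - ?D)"
    by (rule LIS_le, rule card_strict_mono_on_le_non_descents)
  also have "\<dots> = n - card ?D"
    using sub by (simp add: card_Diff_subset)
  finally show ?thesis
    using le_diff_conv2[OF card_mono[OF finite_atLeastAtMost sub]] by simp
qed

theorem proposition1p4:
  fixes n :: nat and q :: real
  assumes "n \<ge> 1" and "0 < q" and "q \<le> 1"
  shows "real n * (1 - q) \<le> mallows_expect n q (\<lambda>p. real (LIS n p))
         \<and> mallows_expect n q (\<lambda>p. real (LIS n p)) \<le> real n - q / (1 + q) * (real n - 1)"
proof
  let ?E = "mallows_expect n q"
  have "real n * (1 - q) = (\<Sum>i\<in>{1..n}. 1 - q)" by simp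
  also have "\<dots> \<le> (\<Sum>i\<in>{1..n}. ?E (\<lambda>p. of_bool (rl_min n p i)))"
    using assms by (intro sum_mono mallows_expect_rl_min) auto
  also have "\<dots> = ?E (\<lambda>p. real (card {i\<in>{1..n}. rl_min n p i}))"
    by (rule mallows_expect_card[symmetric]) simp
  also have "\<dots> \<le> ?E (\<lambda>p. real (LIS n p))"
    using assms card_rl_min_le_LIS by (intro mallows_expect_mono) auto
  finally show "real n * (1 - q) \<le> ?E (\<lambda>p. real (LIS n p))" .
  have "?E (\<lambda>p. real (LIS n p)) \<le> ?E (\<lambda>p. real n - real (card {i\<in>{1..<n}. descent p i}))"
    using assms LIS_add_descents_le
    by (intro mallows_expect_mono) (auto simp: le_diff_eq simp flip: of_nat_add)
  also have "\<dots> = real n - (\<Sum>i\<in>{1..<n}. ?E (\<lambda>p. of_bool (descent p i)))"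
    using mallows_expect_const_diff[OF assms(2)]
      mallows_expect_card[of "{1..<n}" n q "\<lambda>i p. descent p i"]
    by simp
  also have "\<dots> = real n - q / (1 + q) * (real n - 1)"
    using assms by (simp add: mallows_expect_descent of_nat_diff)
  finally show "?E (\<lambda>p. real (LIS n p)) \<le> real n - q / (1 + q) * (real n - 1)" .
qed

end
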